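(* Let $(S,A,P,R,\Gamma)$ be a finite MDP, $\mathcal{C}=\mathring{\mathcal{C}}\cup\partial\mathcal{C}$ a cluster, and $\pi_{\mathcal{C}}$ a policy on $\mathcal{C}$ for which $\partial\mathcal{C}$ is $\pi_{\mathcal{C}}$-reachable; let $a\in\widetilde{A}$ be the coarse action "execute $\pi_{\mathcal{C}}$ in $\mathcal{C}$" and $(X_t)_{t\ge0}$ the associated controlled Markov chain with transition matrix $P^{\pi_{\mathcal{C}}}_{\mathcal{C}}$. The coarse discount factors are characterized by \[ \widetilde{\Gamma}(s,a,s')=\mathbb{E}_s[\Delta_0^{T_1}\mid X_{T_1}=s'],\qquad(s,s')\in\operatorname{supp}_a(\widetilde{P}), \] and, letting $H_{s,s'}:=\widetilde{\Gamma}(s,a,s')$ (and $H_{s,s'}=\mathbb{E}_s[\Delta_0^{T_0}\mid X_{T_0}=s']$ for interior $s$), they may be computed by finding the minimal non-negative solution $H$ of the linear system \[ H_{s,s'}=\sum_{s''\in\mathring{\mathcal{C}}\cap\mathcal{C}'_{s'},\,a'\in A}P_{h_{s'}}(s,a',s'')\Gamma(s,a',s'')H_{s'',s'}+\sum_{a'\in A}P_{h_{s'}}(s,a',s')\Gamma(s,a',s'),\quad s\in\mathring{\mathcal{C}}\cap\mathcal{C}'_{s'}, \] \[ H_{s,s'}=\sum_{s''\in\mathring{\mathcal{C}}\cap\mathcal{C}'_{s'},\,a'\in A}P_{\tilde h_{s'}}(s,a',s'')\Gamma(s,a',s'')H_{s'',s'}+\sum_{a'\in A}P_{\tilde h_{s'}}(s,a',s')\Gamma(s,a',s'),\quad(s,s')\in\operatorname{supp}_a(\widetilde{P}).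 \]
   Context: A finite MDP $(S,A,P,R,\Gamma)$ has finite statespace $S$, finite action set $A$, transition tensor $P(s,a,s')$, bounded rewards $R$, discount factors $\Gamma(s,a,s')\in(0,1)$. A policy gives distributions $\pi(s,\cdot)$ on $A$. With bottleneck set $\mathcal{B}$, a cluster $\mathcal{C}$ is a disjoint union of interior $\mathring{\mathcal{C}}\subseteq S\setminus\mathcal{B}$ and boundary $\partial\mathcal{C}\subseteq\mathcal{B}$. The restriction is $P_{\mathcal{C}}(s,a,s')=P(s,a,s')$ for $s\ne s'\in\mathcal{C}$, $P_{\mathcal{C}}(s,a,s)=P(s,a,s)+\sum_{s''\notin\mathcal{C}}P(s,a,s'')$; $P^\pi_{\mathcal{C}}(s,s')=\sum_aP_{\mathcal{C}}(s,a,s')\pi(s,a)$; $\partial\mathcal{C}$ is $\pi$-reachable if reached in finitely many steps of $P^\pi_{\mathcal{C}}$ from every state in $\mathcal{C}$. The chain: $a_{t+1}\sim\pi_{\mathcal{C}}(X_t)$, $X_{t+1}\sim P_{\mathcal{C}}(X_t,a_{t+1},\cdot)$; $\mathbb{E}_s,\mathbb{P}_s$ condition on $X_0=s$. Hitting times $T_0=\inf\{t\ge0:X_t\in\partial\mathcal{C}\}$, $T_m=\inf\{t>T_{m-1}:X_t\in\partial\mathcal{C}\}$. For stopping times $0\le T<T'<\infty$, $\Delta_T^{T'}=\prod_{t=T}^{T'-1}\Gamma(X_t,a_{t+1},X_{t+1})$. $\widetilde{P}(s,a,s')=\mathbb{P}_s(X_{T_1}=s')$ for $s,s'\in\partial\mathcal{C}$;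 $\operatorname{supp}_a(\widetilde{P})=\{(s,s')\in\partial\mathcal{C}^2:\widetilde{P}(s,a,s')>0\}$. For $s'\in\partial\mathcal{C}$, $h_{s'}(s)=\mathbb{P}_s(X_{T_0}=s')$ is the minimal non-negative function with $h_{s'}(s)=\delta_{s,s'}$ on $\partial\mathcal{C}$ and $h_{s'}(s)=P^{\pi_{\mathcal{C}}}_{\mathcal{C}}(s,s')+\sum_{s''\in\mathring{\mathcal{C}}}P^{\pi_{\mathcal{C}}}_{\mathcal{C}}(s,s'')h_{s'}(s'')$ on $\mathring{\mathcal{C}}$. $\mathcal{C}'_{s'}=\{s\in\mathcal{C}:h_{s'}(s)>0\}$, $P_{h_{s'}}(s,a',s'')=P_{\mathcal{C}}(s,a',s'')\pi_{\mathcal{C}}(s,a')h_{s'}(s'')/h_{s'}(s)$ for $s\in\mathring{\mathcal{C}}\cap\mathcal{C}'_{s'}$, and $P_{\tilde h_{s'}}(s,a',s'')=P_{\mathcal{C}}(s,a',s'')\pi_{\mathcal{C}}(s,a')h_{s'}(s'')/\widetilde{P}(s,a,s')$ for $(s,s')\in\operatorname{supp}_a(\widetilde{P})$, with $a'\in A$, $s''\in\mathcal{C}'_{s'}$. *)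

theory Defs
  imports Complex_Main
begin

text \<open>A cluster is C = Ci \<union> Cb (interior Ci, boundary Cb).\<close>

definition restrictP :: "'s::finite set \<Rightarrow> ('s \<Rightarrow> 'a \<Rightarrow> 's \<Rightarrow> real) \<Rightarrow> 's \<Rightarrow> 'a \<Rightarrow> 's \<Rightarrow> real" where
  "restrictP C P s a s' =
     (if s \<in> C \<and> s' \<in> C then
        (if s = s' then P s a s + (\<Sum>s''\<in>-C. P s a s'') else P s a s')
      else 0)"

definition policyP :: "'s::finite set \<Rightarrow> ('s \<Rightarrow> 'a::finite \<Rightarrow> 's \<Rightarrow> real) \<Rightarrow> ('s \<Rightarrow> 'a \<Rightarrow> real) \<Rightarrow> 's \<Rightarrow> 's \<Rightarrow> real" where
  "policyP C P pol s s' = (\<Sum>a\<in>UNIV. restrictP C P s a s' * pol s a)"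

definition boundary_reachable :: "'s::finite set \<Rightarrow> 's set \<Rightarrow> ('s \<Rightarrow> 'a::finite \<Rightarrow> 's \<Rightarrow> real) \<Rightarrow> ('s \<Rightarrow> 'a \<Rightarrow> real) \<Rightarrow> bool" where
  "boundary_reachable C Cb P pol \<longleftrightarrow>
     (\<forall>s\<in>C. \<exists>b\<in>Cb. (s, b) \<in> {(x, y). policyP C P pol x y > 0}\<^sup>*)"

text \<open>Finite trajectories of the controlled chain: X_0 = s and a list of steps
  (a_{t+1}, X_{t+1}). The weight of a path is the product of one-step weights.\<close>
fun path_weight :: "('s \<Rightarrow> 'a \<Rightarrow> 's \<Rightarrow> real) \<Rightarrow> 's \<Rightarrow> ('a \<times> 's) list \<Rightarrow> real" where
  "path_weight w s [] = 1"
| "path_weight w s ((a, y) # xs) = w s a y * path_weight w y xs"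

definition traj :: "'s \<Rightarrow> ('a \<times> 's) list \<Rightarrow> 's list" where
  "traj s xs = s # map snd xs"

definition path_prob :: "'s::finite set \<Rightarrow> ('s \<Rightarrow> 'a \<Rightarrow> 's \<Rightarrow> real) \<Rightarrow> ('s \<Rightarrow> 'a \<Rightarrow> real) \<Rightarrow> 's \<Rightarrow> ('a \<times> 's) list \<Rightarrow> real" where
  "path_prob C P pol s xs = path_weight (\<lambda>x a y. pol x a * restrictP C P x a y) s xs"

definition path_disc :: "('s \<Rightarrow> 'a \<Rightarrow> 's \<Rightarrow> real) \<Rightarrow> 's \<Rightarrow> ('a \<times> 's) list \<Rightarrow> real" where
  "path_disc Gam s xs = path_weight Gam s xs"

text \<open>T_0 = length xs: first time t \<ge> 0 with X_t in Cb.\<close>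
definition T0_is :: "'s set \<Rightarrow> 's \<Rightarrow> ('a \<times> 's) list \<Rightarrow> bool" where
  "T0_is Cb s xs \<longleftrightarrow> traj s xs ! length xs \<in> Cb \<and> (\<forall>k<length xs. traj s xs ! k \<notin> Cb)"

text \<open>T_1 = length xs (for X_0 in Cb): first time t > 0 with X_t in Cb.\<close>
definition T1_is :: "'s set \<Rightarrow> 's \<Rightarrow> ('a \<times> 's) list \<Rightarrow> bool" where
  "T1_is Cb s xs \<longleftrightarrow> length xs \<ge> 1 \<and> traj s xs ! length xs \<in> Cb \<and>
     (\<forall>k. 0 < k \<and> k < length xs \<longrightarrow> traj s xs ! k \<notin> Cb)"

text \<open>E_s[ f(path up to T) ; T < \<infinity>, X_T = s' ] summed over the (disjoint) events T = n.\<close>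
definition stopped_sum :: "('s \<Rightarrow> ('a::finite \<times> 's::finite) list \<Rightarrow> bool) \<Rightarrow> ('s \<Rightarrow> ('a \<times> 's) list \<Rightarrow> real) \<Rightarrow> 's \<Rightarrow> 's \<Rightarrow> real" where
  "stopped_sum isT f s s' =
     (\<Sum>n. \<Sum>xs\<in>{xs. length xs = n \<and> isT s xs \<and> last (traj s xs) = s'}. f s xs)"

definition hfun :: "'s::finite set \<Rightarrow> 's set \<Rightarrow> ('s \<Rightarrow> 'a::finite \<Rightarrow> 's \<Rightarrow> real) \<Rightarrow> ('s \<Rightarrow> 'a \<Rightarrow> real) \<Rightarrow> 's \<Rightarrow> 's \<Rightarrow> real" where
  "hfun Ci Cb P pol s' s = stopped_sum (T0_is Cb) (path_prob (Ci \<union> Cb) P pol) s s'"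

definition Ptilde :: "'s::finite set \<Rightarrow> 's set \<Rightarrow> ('s \<Rightarrow> 'a::finite \<Rightarrow> 's \<Rightarrow> real) \<Rightarrow> ('s \<Rightarrow> 'a \<Rightarrow> real) \<Rightarrow> 's \<Rightarrow> 's \<Rightarrow> real" where
  "Ptilde Ci Cb P pol s s' = stopped_sum (T1_is Cb) (path_prob (Ci \<union> Cb) P pol) s s'"

text \<open>H_{s,s'}: for boundary s, Gammatilde(s,a,s') = E_s[Delta_0^{T_1} | X_{T_1} = s'];
  for interior s, E_s[Delta_0^{T_0} | X_{T_0} = s'] (elementary conditional expectation
  given an event: E[Delta; event] / P(event)).\<close>
definition coarse_H :: "'s::finite set \<Rightarrow> 's set \<Rightarrow> ('s \<Rightarrow> 'a::finite \<Rightarrow> 's \<Rightarrow> real) \<Rightarrow> ('s \<Rightarrow> 'a \<Rightarrow> 's \<Rightarrow> real) \<Rightarrow> ('s \<Rightarrow> 'a \<Rightarrow> real) \<Rightarrow> 's \<Rightarrow> 's \<Rightarrow> real" where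
  "coarse_H Ci Cb P Gam pol s s' =
     (if s \<in> Cb then
        stopped_sum (T1_is Cb) (\<lambda>x xs. path_prob (Ci \<union> Cb) P pol x xs * path_disc Gam x xs) s s'
          / Ptilde Ci Cb P pol s s'
      else
        stopped_sum (T0_is Cb) (\<lambda>x xs. path_prob (Ci \<union> Cb) P pol x xs * path_disc Gam x xs) s s'
          / hfun Ci Cb P pol s' s)"

text \<open>P_{h_{s'}}(s,a',s'') for interior s with h_{s'}(s) > 0.\<close>
definition P_h :: "'s::finite set \<Rightarrow> 's set \<Rightarrow> ('s \<Rightarrow> 'a::finite \<Rightarrow> 's \<Rightarrow> real) \<Rightarrow> ('s \<Rightarrow> 'a \<Rightarrow> real) \<Rightarrow> 's \<Rightarrow> 's \<Rightarrow> 'a \<Rightarrow> 's \<Rightarrow> real" where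
  "P_h Ci Cb P pol s' s a' s'' =
     restrictP (Ci \<union> Cb) P s a' s'' * pol s a' * hfun Ci Cb P pol s' s'' / hfun Ci Cb P pol s' s"

text \<open>P_{tilde h_{s'}}(s,a',s'') for boundary s with Ptilde(s,a,s') > 0.\<close>
definition P_th :: "'s::finite set \<Rightarrow> 's set \<Rightarrow> ('s \<Rightarrow> 'a::finite \<Rightarrow> 's \<Rightarrow> real) \<Rightarrow> ('s \<Rightarrow> 'a \<Rightarrow> real) \<Rightarrow> 's \<Rightarrow> 's \<Rightarrow> 'a \<Rightarrow> 's \<Rightarrow> real" where
  "P_th Ci Cb P pol s' s a' s'' =
     restrictP (Ci \<union> Cb) P s a' s'' * pol s a' * hfun Ci Cb P pol s' s'' / Ptilde Ci Cb P pol s s'"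

end

theory Submission
  imports Defs
begin

text \<open>Fix a boundary target t. Both h(s) = P_s(X_{T_0} = t) and
  u(s) = E_s[\<Delta>_0^{T_0}; X_{T_0} = t] are sums over first-passage paths, for the transition
  kernel and for the kernel discounted by \<Gamma>. First-step analysis makes u harmonic for the
  discounted kernel off the boundary, and u is the least non-negative function that is
  superharmonic there and equals 1 at t. Multiplying the interior equations by h(s) (a Doob
  h-transform) turns a solution G into such a function h\<cdot>G, so H = u/h solves the system and
  lies below every non-negative solution; the boundary rows follow by one step out of the
  boundary.\<close>

lemma path_weight_mult:
  "path_weight f s xs * path_weight g s xs = path_weight (\<lambda>x a y. f x a y * g x a y) s xs"
  by (induction xs arbitrary: s) (auto simp: algebra_simps)

lemma path_weight_nonneg: "(\<And>x a y. 0 \<le> w x a y) \<Longrightarrow> 0 \<le> path_weight w s xs"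
  by (induction xs arbitrary: s) auto

lemma path_weight_mono:
  assumes "\<And>x a y. 0 \<le> v x a y" "\<And>x a y. v x a y \<le> w x a y"
  shows "path_weight v s xs \<le> path_weight w s xs"
proof (induction xs arbitrary: s)
  case (Cons p xs)
  then show ?case
    using assms by (cases p) (auto intro!: mult_mono path_weight_nonneg order_trans[OF assms])
qed simp

lemma sum_lists_length_Suc:
  fixes f :: "('a::finite \<times> 's::finite) list \<Rightarrow> 'b::comm_monoid_add"
  shows "(\<Sum>xs\<in>{xs. length xs = Suc n}. f xs)
       = (\<Sum>a\<in>UNIV. \<Sum>y\<in>UNIV. \<Sum>ys\<in>{ys. length ys = n}. f ((a, y) # ys))"
proof -
  let ?L = "{ys :: ('a \<times> 's) list. length ys = n}"
  have "{xs. length xs = Suc n} = (\<lambda>(p, ys). p # ys) ` (UNIV \<times> ?L)"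
    by (auto simp: length_Suc_conv image_iff)
  moreover have "inj_on (\<lambda>(p, ys). p # ys) (UNIV \<times> ?L)"
    by (auto simp: inj_on_def)
  ultimately have "(\<Sum>xs\<in>{xs. length xs = Suc n}. f xs) = (\<Sum>(p, ys)\<in>UNIV \<times> ?L. f (p # ys))"
    by (simp add: sum.reindex case_prod_unfold)
  also have "\<dots> = (\<Sum>p\<in>UNIV. \<Sum>ys\<in>?L. f (p # ys))"
    by (rule sum.cartesian_product[symmetric])
  also have "\<dots> = (\<Sum>(a, y)\<in>UNIV \<times> UNIV. \<Sum>ys\<in>?L. f ((a, y) # ys))"
    by (simp add: case_prod_unfold)
  also have "\<dots> = (\<Sum>a\<in>UNIV. \<Sum>y\<in>UNIV. \<Sum>ys\<in>?L. f ((a, y) # ys))"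
    by (rule sum.cartesian_product[symmetric])
  finally show ?thesis .
qed

lemma T0_is_Cons: "T0_is Cb s ((a, y) # ys) \<longleftrightarrow> s \<notin> Cb \<and> T0_is Cb y ys"
  by (auto simp: T0_is_def traj_def less_Suc_eq_0_disj nth_Cons split: nat.splits)

lemma T1_is_Cons: "T1_is Cb s ((a, y) # ys) \<longleftrightarrow> T0_is Cb y ys"
  by (auto simp: T1_is_def T0_is_def traj_def nth_Cons split: nat.splits)

lemma last_traj_Cons: "last (traj s ((a, y) # ys)) = last (traj y ys)"
  by (simp add: traj_def)

section \<open>First-passage sums of a substochastic kernel\<close>

definition substochastic :: "('s::finite \<Rightarrow> 'a::finite \<Rightarrow> 's \<Rightarrow> real) \<Rightarrow> bool" where
  "substochastic w \<longleftrightarrow> (\<forall>x a y. 0 \<le> w x a y) \<and> (\<forall>x. (\<Sum>a\<in>UNIV. \<Sum>y\<in>UNIV. w x a y) \<le> 1)"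

definition hit_weight :: "'s::finite set \<Rightarrow> ('s \<Rightarrow> 'a::finite \<Rightarrow> 's \<Rightarrow> real) \<Rightarrow> 's \<Rightarrow> nat \<Rightarrow> 's \<Rightarrow> real" where
  "hit_weight Cb w t n s =
     (\<Sum>xs\<in>{xs. length xs = n \<and> T0_is Cb s xs \<and> last (traj s xs) = t}. path_weight w s xs)"

definition hit_sum :: "'s::finite set \<Rightarrow> ('s \<Rightarrow> 'a::finite \<Rightarrow> 's \<Rightarrow> real) \<Rightarrow> 's \<Rightarrow> 's \<Rightarrow> real" where
  "hit_sum Cb w t s = (\<Sum>n. hit_weight Cb w t n s)"

lemma stopped_sum_T0_is: "stopped_sum (T0_is Cb) (path_weight w) s t = hit_sum Cb w t s"
  by (simp add: stopped_sum_def hit_sum_def hit_weight_def)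

lemma sum_length_filter:
  "(\<Sum>xs\<in>{xs. length xs = n \<and> Q xs}. f xs)
     = (\<Sum>xs\<in>{xs :: 'b::finite list. length xs = n}. if Q xs then f xs else 0)"
proof -
  have "finite {xs :: 'b list. length xs = n}"
    using finite_lists_length_eq[of "UNIV :: 'b set" n] by simp
  then show ?thesis
    by (simp add: sum.inter_filter[symmetric] conj_commute)
qed

lemma hit_weight_0:
  fixes w :: "'s::finite \<Rightarrow> 'a::finite \<Rightarrow> 's \<Rightarrow> real"
  shows "hit_weight Cb w t 0 s = (if s \<in> Cb \<and> s = t then 1 else 0)"
proof -
  have no_steps: "{xs :: ('a \<times> 's) list. length xs = 0} = {[]}"
    by auto
  show ?thesis
    unfolding hit_weight_def sum_length_filter no_steps by (auto simp: T0_is_def traj_def)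
qed

lemma hit_weight_Suc:
  "hit_weight Cb w t (Suc n) s =
     (if s \<in> Cb then 0 else (\<Sum>a\<in>UNIV. \<Sum>y\<in>UNIV. w s a y * hit_weight Cb w t n y))"
  unfolding hit_weight_def sum_length_filter sum_lists_length_Suc
  by (auto simp: T0_is_Cons last_traj_Cons sum_distrib_left intro!: sum.cong)

lemma hit_weight_nonneg: "substochastic w \<Longrightarrow> 0 \<le> hit_weight Cb w t n s"
  unfolding hit_weight_def substochastic_def by (auto intro!: sum_nonneg path_weight_nonneg)

lemma sum_hit_weight_Suc:
  "(\<Sum>n<N. hit_weight Cb w t (Suc n) s) =
     (if s \<in> Cb then 0 else (\<Sum>a\<in>UNIV. \<Sum>y\<in>UNIV. w s a y * (\<Sum>n<N. hit_weight Cb w t n y)))"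
  by (simp add: hit_weight_Suc sum_distrib_left sum.swap[of _ "{..<N}"])

lemma sum_hit_weight_le_1: "substochastic w \<Longrightarrow> (\<Sum>n<N. hit_weight Cb w t n s) \<le> 1"
proof (induction N arbitrary: s)
  case (Suc N)
  have "(\<Sum>a\<in>UNIV. \<Sum>y\<in>UNIV. w s a y * (\<Sum>n<N. hit_weight Cb w t n y))
               \<le> (\<Sum>a\<in>UNIV. \<Sum>y\<in>UNIV. w s a y)"
    using Suc.prems unfolding substochastic_def
    by (intro sum_mono mult_right_le_one_le sum_nonneg hit_weight_nonneg Suc.IH Suc.prems) auto
  also have "\<dots> \<le> 1"
    using Suc.prems by (simp add: substochastic_def)
  finally show ?case
    unfolding sum.lessThan_Suc_shift by (auto simp: sum_hit_weight_Suc hit_weight_0)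
qed simp

lemma summable_hit_weight: "substochastic w \<Longrightarrow> summable (\<lambda>n. hit_weight Cb w t n s)"
  by (rule summableI_nonneg_bounded[OF hit_weight_nonneg sum_hit_weight_le_1])

lemma hit_sum_nonneg: "substochastic w \<Longrightarrow> 0 \<le> hit_sum Cb w t s"
  unfolding hit_sum_def by (intro suminf_nonneg summable_hit_weight hit_weight_nonneg)

lemma sum_hit_weight_le_hit_sum: "substochastic w \<Longrightarrow> (\<Sum>n<N. hit_weight Cb w t n s) \<le> hit_sum Cb w t s"
  unfolding hit_sum_def by (intro sum_le_suminf summable_hit_weight hit_weight_nonneg) auto

lemma hit_weight_one_step_sums:
  assumes "substochastic w"
  shows "(\<lambda>n. \<Sum>a\<in>UNIV. \<Sum>y\<in>UNIV. w s a y * hit_weight Cb w t n y)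
           sums (\<Sum>a\<in>UNIV. \<Sum>y\<in>UNIV. w s a y * hit_sum Cb w t y)"
  unfolding hit_sum_def
  by (intro sums_sum sums_mult summable_sums summable_hit_weight assms)

lemma hit_sum_first_step:
  assumes "substochastic w"
  shows "hit_sum Cb w t s =
           (if s \<in> Cb then (if s = t then 1 else 0)
            else (\<Sum>a\<in>UNIV. \<Sum>y\<in>UNIV. w s a y * hit_sum Cb w t y))"
proof -
  let ?step = "if s \<in> Cb then 0 else (\<Sum>a\<in>UNIV. \<Sum>y\<in>UNIV. w s a y * hit_sum Cb w t y)"
  have "(\<lambda>n. hit_weight Cb w t (Suc n) s) sums ?step"
    using hit_weight_one_step_sums[OF assms] by (simp add: hit_weight_Suc)
  then have "(\<lambda>n. hit_weight Cb w t n s) sums (?step + hit_weight Cb w t 0 s)"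
    by (rule sums_Suc_iff[THEN iffD1])
  then show ?thesis
    unfolding hit_sum_def by (auto simp: sums_iff hit_weight_0)
qed

lemma hit_sum_mono:
  assumes "substochastic v" "substochastic w" "\<And>x a y. v x a y \<le> w x a y"
  shows "hit_sum Cb v t s \<le> hit_sum Cb w t s"
  unfolding hit_sum_def
proof (intro suminf_le allI summable_hit_weight assms)
  show "hit_weight Cb v t n s \<le> hit_weight Cb w t n s" for n
    using assms unfolding hit_weight_def substochastic_def by (intro sum_mono path_weight_mono) auto
qed

lemma stopped_sum_T1_is:
  assumes "substochastic w"
  shows "stopped_sum (T1_is Cb) (path_weight w) s t
           = (\<Sum>a\<in>UNIV. \<Sum>y\<in>UNIV. w s a y * hit_sum Cb w t y)"
proof -
  define G where "G n = (\<Sum>xs\<in>{xs. length xs = n \<and> T1_is Cb s xs \<and> last (traj s xs) = t}.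
                          path_weight w s xs)" for n
  have "G 0 = 0"
    by (simp add: G_def T1_is_def)
  moreover have "G (Suc n) = (\<Sum>a\<in>UNIV. \<Sum>y\<in>UNIV. w s a y * hit_weight Cb w t n y)" for n
    unfolding G_def hit_weight_def sum_length_filter sum_lists_length_Suc
    by (auto simp: T1_is_Cons last_traj_Cons sum_distrib_left intro!: sum.cong)
  then have "(\<lambda>n. G (Suc n)) sums (\<Sum>a\<in>UNIV. \<Sum>y\<in>UNIV. w s a y * hit_sum Cb w t y)"
    using hit_weight_one_step_sums[OF assms] by simp
  ultimately have "G sums (\<Sum>a\<in>UNIV. \<Sum>y\<in>UNIV. w s a y * hit_sum Cb w t y)"
    by (simp add: sums_Suc_iff)
  then show ?thesis
    unfolding stopped_sum_def G_def by (simp add: sums_iff)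
qed

lemma hit_sum_le_superharmonic:
  assumes w: "substochastic w"
    and nonneg: "\<And>y. 0 \<le> \<phi> y" and target: "1 \<le> \<phi> t"
    and super: "\<And>x. x \<notin> Cb \<Longrightarrow> 0 < hit_sum Cb w t x \<Longrightarrow>
                  (\<Sum>a\<in>UNIV. \<Sum>y\<in>UNIV. w x a y * \<phi> y) \<le> \<phi> x"
  shows "hit_sum Cb w t s \<le> \<phi> s"
proof -
  have "(\<Sum>n<N. hit_weight Cb w t n x) \<le> \<phi> x" for N x
  proof (induction N arbitrary: x)
    case (Suc N)
    consider "x \<in> Cb" | "x \<notin> Cb" "0 < hit_sum Cb w t x" | "x \<notin> Cb" "hit_sum Cb w t x \<le> 0"
      by fastforce
    then show ?case
    proof cases
      case 1
      then show ?thesis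
        using nonneg target unfolding sum.lessThan_Suc_shift by (simp add: sum_hit_weight_Suc hit_weight_0)
    next
      case 2
      have "(\<Sum>a\<in>UNIV. \<Sum>y\<in>UNIV. w x a y * (\<Sum>n<N. hit_weight Cb w t n y))
              \<le> (\<Sum>a\<in>UNIV. \<Sum>y\<in>UNIV. w x a y * \<phi> y)"
        using w unfolding substochastic_def by (intro sum_mono mult_left_mono Suc.IH) auto
      then show ?thesis
        using 2 super[OF 2] unfolding sum.lessThan_Suc_shift by (simp add: sum_hit_weight_Suc hit_weight_0)
    next
      case 3
      then show ?thesis
        using sum_hit_weight_le_hit_sum[OF w, where N = "Suc N" and Cb = Cb and t = t and s = x] nonneg[of x]
        by linarith
    qed
  qed (simp add: nonneg)
  then show ?thesis
    unfolding hit_sum_def by (intro suminf_le_const summable_hit_weight w)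
qed

section \<open>The chain restricted to a cluster\<close>

lemma restrictP_outside: "x \<notin> C \<Longrightarrow> restrictP C P x a y = 0"
  by (simp add: restrictP_def)

lemma restrictP_nonneg: "(\<And>s a s'. 0 \<le> P s a s') \<Longrightarrow> 0 \<le> restrictP C P x a y"
  by (auto simp: restrictP_def intro!: add_nonneg_nonneg sum_nonneg)

lemma sum_restrictP:
  fixes P :: "'s::finite \<Rightarrow> 'a \<Rightarrow> 's \<Rightarrow> real"
  assumes "x \<in> C"
  shows "(\<Sum>y\<in>UNIV. restrictP C P x a y) = (\<Sum>y\<in>UNIV. P x a y)"
proof -
  have "(\<Sum>y\<in>UNIV. restrictP C P x a y) = (\<Sum>y\<in>C. restrictP C P x a y)"
    by (rule sum.mono_neutral_right) (auto simp: restrictP_def)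
  also have "\<dots> = (\<Sum>y\<in>C. P x a y + (if y = x then (\<Sum>s''\<in>-C. P x a s'') else 0))"
    using assms by (intro sum.cong) (auto simp: restrictP_def)
  also have "\<dots> = (\<Sum>y\<in>C. P x a y) + (\<Sum>s''\<in>-C. P x a s'')"
    using assms by (simp add: sum.distrib)
  also have "\<dots> = (\<Sum>y\<in>UNIV. P x a y)"
    using sum.subset_diff[of C UNIV "P x a"] by (simp add: Compl_eq_Diff_UNIV)
  finally show ?thesis .
qed

lemma sum_sum_supported:
  fixes \<omega> :: "'a::finite \<Rightarrow> 's::finite \<Rightarrow> real"
  assumes "t \<notin> A" "\<And>y. y \<notin> A \<Longrightarrow> y \<noteq> t \<Longrightarrow> \<phi> y = 0" "\<phi> t = 1"
  shows "(\<Sum>a\<in>UNIV. \<Sum>y\<in>UNIV. \<omega> a y * \<phi> y) = (\<Sum>y\<in>A. \<Sum>a\<in>UNIV. \<omega> a y * \<phi> y) + (\<Sum>a\<in>UNIV. \<omega> a t)"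
proof -
  have "(\<Sum>a\<in>UNIV. \<Sum>y\<in>UNIV. \<omega> a y * \<phi> y) = (\<Sum>y\<in>UNIV. \<Sum>a\<in>UNIV. \<omega> a y * \<phi> y)"
    by (rule sum.swap)
  also have "\<dots> = (\<Sum>y\<in>insert t A. \<Sum>a\<in>UNIV. \<omega> a y * \<phi> y)"
    by (rule sum.mono_neutral_right) (auto simp: assms(2))
  also have "\<dots> = (\<Sum>y\<in>A. \<Sum>a\<in>UNIV. \<omega> a y * \<phi> y) + (\<Sum>a\<in>UNIV. \<omega> a t)"
    using assms(1,3) by simp
  finally show ?thesis .
qed

definition chain_kernel ::
    "'s::finite set \<Rightarrow> ('s \<Rightarrow> 'a::finite \<Rightarrow> 's \<Rightarrow> real) \<Rightarrow> ('s \<Rightarrow> 'a \<Rightarrow> real) \<Rightarrow> 's \<Rightarrow> 'a \<Rightarrow> 's \<Rightarrow> real" where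
  "chain_kernel C P pol x a y = pol x a * restrictP C P x a y"

definition discounted :: "('s \<Rightarrow> 'a \<Rightarrow> 's \<Rightarrow> real) \<Rightarrow> ('s \<Rightarrow> 'a \<Rightarrow> 's \<Rightarrow> real) \<Rightarrow> 's \<Rightarrow> 'a \<Rightarrow> 's \<Rightarrow> real" where
  "discounted Gam w x a y = w x a y * Gam x a y"

locale cluster_policy =
  fixes P Gam :: "'s::finite \<Rightarrow> 'a::finite \<Rightarrow> 's \<Rightarrow> real"
    and pol :: "'s \<Rightarrow> 'a \<Rightarrow> real"
    and Ci Cb :: "'s set"
  assumes P_nonneg: "\<And>s a s'. 0 \<le> P s a s'"
    and P_stoch: "\<And>s a. (\<Sum>s'\<in>UNIV. P s a s') = 1"
    and Gam_nonneg: "\<And>s a s'. 0 \<le> Gam s a s'"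
    and Gam_le_1: "\<And>s a s'. Gam s a s' \<le> 1"
    and cluster_disj: "Ci \<inter> Cb = {}"
    and pol_nonneg: "\<And>s a. s \<in> Ci \<union> Cb \<Longrightarrow> 0 \<le> pol s a"
    and pol_sum: "\<And>s. s \<in> Ci \<union> Cb \<Longrightarrow> (\<Sum>a\<in>UNIV. pol s a) = 1"
begin

abbreviation q where "q \<equiv> chain_kernel (Ci \<union> Cb) P pol"
abbreviation qg where "qg \<equiv> discounted Gam q"
abbreviation hit where "hit \<equiv> hfun Ci Cb P pol"
abbreviation dhit where "dhit \<equiv> hit_sum Cb qg"
abbreviation Pcoarse where "Pcoarse \<equiv> Ptilde Ci Cb P pol"
abbreviation Gcoarse where "Gcoarse \<equiv> coarse_H Ci Cb P Gam pol"
abbreviation Ci' where "Ci' t \<equiv> {x \<in> Ci. 0 < hit t x}"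

lemma chain_kernel_outside: "x \<notin> Ci \<union> Cb \<Longrightarrow> q x a y = 0"
  by (simp add: chain_kernel_def restrictP_outside)

lemma chain_kernel_nonneg: "0 \<le> q x a y"
  by (cases "x \<in> Ci \<union> Cb")
    (auto simp: chain_kernel_def restrictP_outside intro!: mult_nonneg_nonneg pol_nonneg restrictP_nonneg P_nonneg)

lemma substochastic_chain_kernel: "substochastic q"
proof -
  have "(\<Sum>a\<in>UNIV. \<Sum>y\<in>UNIV. q x a y) \<le> 1" for x
  proof (cases "x \<in> Ci \<union> Cb")
    case True
    then have "(\<Sum>a\<in>UNIV. \<Sum>y\<in>UNIV. q x a y) = (\<Sum>a\<in>UNIV. pol x a)"
      by (simp add: chain_kernel_def sum_distrib_left[symmetric] sum_restrictP P_stoch)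
    then show ?thesis
      using True pol_sum by simp
  qed (simp add: chain_kernel_outside)
  then show ?thesis
    by (simp add: substochastic_def chain_kernel_nonneg)
qed

lemma discounted_le: "qg x a y \<le> q x a y"
  using chain_kernel_nonneg Gam_le_1 by (simp add: discounted_def mult_left_le)

lemma discounted_nonneg: "0 \<le> qg x a y"
  using chain_kernel_nonneg Gam_nonneg by (simp add: discounted_def)

lemma substochastic_discounted: "substochastic qg"
proof -
  have "(\<Sum>a\<in>UNIV. \<Sum>y\<in>UNIV. qg x a y) \<le> (\<Sum>a\<in>UNIV. \<Sum>y\<in>UNIV. q x a y)" for x
    by (intro sum_mono discounted_le)
  then show ?thesis
    using substochastic_chain_kernel discounted_nonneg unfolding substochastic_def
    by (meson order_trans)
qed

lemma path_prob_eq: "path_prob (Ci \<union> Cb) P pol = path_weight q"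
  by (intro ext) (simp add: path_prob_def chain_kernel_def[abs_def])

lemma hfun_eq_hit_sum: "hit t s = hit_sum Cb q t s"
  by (simp add: hfun_def path_prob_eq stopped_sum_T0_is)

lemma Ptilde_eq: "Pcoarse s t = (\<Sum>a\<in>UNIV. \<Sum>y\<in>UNIV. q s a y * hit t y)"
  by (simp add: Ptilde_def path_prob_eq stopped_sum_T1_is[OF substochastic_chain_kernel] hfun_eq_hit_sum)

lemma coarse_H_eq:
  "Gcoarse s t = (if s \<in> Cb then (\<Sum>a\<in>UNIV. \<Sum>y\<in>UNIV. qg s a y * dhit t y) / Pcoarse s t else dhit t s / hit t s)"
proof -
  have "(\<lambda>x xs. path_prob (Ci \<union> Cb) P pol x xs * path_disc Gam x xs) = path_weight qg"
    by (intro ext) (simp add: path_prob_eq path_disc_def path_weight_mult discounted_def[abs_def])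
  then show ?thesis
    by (simp add: coarse_H_def stopped_sum_T0_is stopped_sum_T1_is[OF substochastic_discounted])
qed

lemma hfun_nonneg: "0 \<le> hit t s"
  by (simp add: hfun_eq_hit_sum hit_sum_nonneg substochastic_chain_kernel)

lemma hfun_target: "t \<in> Cb \<Longrightarrow> hit t t = 1"
  unfolding hfun_eq_hit_sum by (subst hit_sum_first_step[OF substochastic_chain_kernel]) simp

lemma discounted_hit_sum_le_hfun: "dhit t s \<le> hit t s"
  unfolding hfun_eq_hit_sum
  by (intro hit_sum_mono substochastic_discounted substochastic_chain_kernel discounted_le)

lemma discounted_hit_sum_eq_0:
  assumes "y \<notin> Ci' t" "y \<noteq> t"
  shows "dhit t y = 0"
proof -
  consider "y \<in> Cb" | "y \<in> Ci" | "y \<notin> Ci \<union> Cb"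
    by blast
  then show ?thesis
  proof cases
    case 1
    then show ?thesis
      using assms by (subst hit_sum_first_step[OF substochastic_discounted]) simp
  next
    case 2
    then have "hit t y \<le> 0"
      using assms by auto
    then show ?thesis
      using discounted_hit_sum_le_hfun[of t y] hit_sum_nonneg[OF substochastic_discounted, of Cb t y]
      by simp
  next
    case 3
    then show ?thesis
      by (subst hit_sum_first_step[OF substochastic_discounted])
        (simp add: discounted_def chain_kernel_outside)
  qed
qed


section \<open>The coarse system\<close>

text \<open>Under lift, the coarse system for G becomes a harmonic equation for the discounted
  kernel (see rhs_eq_lift).\<close>
definition lift :: "('s \<Rightarrow> 's \<Rightarrow> real) \<Rightarrow> 's \<Rightarrow> 's \<Rightarrow> real" where
  "lift G t y = (if y \<in> Ci' t then hit t y * G y t else if y = t then 1 else 0)"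

definition interior_rhs :: "('s \<Rightarrow> 's \<Rightarrow> real) \<Rightarrow> 's \<Rightarrow> 's \<Rightarrow> real" where
  "interior_rhs G s t =
     (\<Sum>s''\<in>Ci' t. \<Sum>a'\<in>UNIV. P_h Ci Cb P pol t s a' s'' * Gam s a' s'' * G s'' t)
     + (\<Sum>a'\<in>UNIV. P_h Ci Cb P pol t s a' t * Gam s a' t)"

definition boundary_rhs :: "('s \<Rightarrow> 's \<Rightarrow> real) \<Rightarrow> 's \<Rightarrow> 's \<Rightarrow> real" where
  "boundary_rhs G s t =
     (\<Sum>s''\<in>Ci' t. \<Sum>a'\<in>UNIV. P_th Ci Cb P pol t s a' s'' * Gam s a' s'' * G s'' t)
     + (\<Sum>a'\<in>UNIV. P_th Ci Cb P pol t s a' t * Gam s a' t)"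

lemma rhs_eq_lift:
  assumes "t \<in> Cb"
  shows "interior_rhs G s t = (\<Sum>a\<in>UNIV. \<Sum>y\<in>UNIV. qg s a y * lift G t y) / hit t s"
    and "boundary_rhs G s t = (\<Sum>a\<in>UNIV. \<Sum>y\<in>UNIV. qg s a y * lift G t y) / Pcoarse s t"
proof -
  have "t \<notin> Ci' t"
    using assms cluster_disj by auto
  then have "(\<Sum>a\<in>UNIV. \<Sum>y\<in>UNIV. qg s a y * lift G t y) / D
    = (\<Sum>y\<in>Ci' t. \<Sum>a\<in>UNIV. q s a y * hit t y / D * Gam s a y * G y t) + (\<Sum>a\<in>UNIV. q s a t * hit t t / D * Gam s a t)"
    for D
    using hfun_target[OF assms]
    by (subst sum_sum_supported[where A = "Ci' t" and t = t])
      (auto simp: lift_def discounted_def add_divide_distrib sum_divide_distrib algebra_simps)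
  then show "interior_rhs G s t = (\<Sum>a\<in>UNIV. \<Sum>y\<in>UNIV. qg s a y * lift G t y) / hit t s"
    and "boundary_rhs G s t = (\<Sum>a\<in>UNIV. \<Sum>y\<in>UNIV. qg s a y * lift G t y) / Pcoarse s t"
    by (simp_all add: interior_rhs_def boundary_rhs_def P_h_def P_th_def chain_kernel_def algebra_simps)
qed

lemma lift_coarse_H: "t \<in> Cb \<Longrightarrow> lift Gcoarse t y = dhit t y"
  using cluster_disj discounted_hit_sum_eq_0[of y t]
  by (auto simp: lift_def coarse_H_eq hit_sum_first_step[OF substochastic_discounted, of Cb t t])

lemma coarse_H_nonneg: "0 \<le> Gcoarse s t"
  unfolding coarse_H_eq Ptilde_eq
  by (auto intro!: divide_nonneg_nonneg sum_nonneg mult_nonneg_nonneg hfun_nonneg chain_kernel_nonneg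
      discounted_nonneg hit_sum_nonneg substochastic_discounted)

lemma coarse_H_solves:
  assumes "t \<in> Cb"
  shows "s \<in> Ci \<Longrightarrow> Gcoarse s t = interior_rhs Gcoarse s t"
    and "s \<in> Cb \<Longrightarrow> Gcoarse s t = boundary_rhs Gcoarse s t"
  using cluster_disj
  by (auto simp: rhs_eq_lift[OF assms] lift_coarse_H[OF assms] coarse_H_eq
      hit_sum_first_step[OF substochastic_discounted, of Cb t s])

lemma discounted_hit_sum_le_lift:
  assumes t: "t \<in> Cb"
    and nonneg: "\<And>y. y \<in> Ci' t \<Longrightarrow> 0 \<le> G y t"
    and sol: "\<And>y. y \<in> Ci' t \<Longrightarrow> G y t = interior_rhs G y t"
  shows "dhit t s \<le> lift G t s"
proof (rule hit_sum_le_superharmonic[OF substochastic_discounted])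
  show "0 \<le> lift G t y" for y
    using nonneg hfun_nonneg by (simp add: lift_def)
  show "1 \<le> lift G t t"
    using t cluster_disj by (auto simp: lift_def)
  fix x
  assume "x \<notin> Cb" "0 < dhit t x"
  then have x: "x \<in> Ci' t"
    using discounted_hit_sum_eq_0[of x t] t by auto
  then have "lift G t x = hit t x * interior_rhs G x t"
    by (simp add: lift_def sol)
  also have "\<dots> = (\<Sum>a\<in>UNIV. \<Sum>y\<in>UNIV. qg x a y * lift G t y)"
    using x by (simp add: rhs_eq_lift(1)[OF t])
  finally show "(\<Sum>a\<in>UNIV. \<Sum>y\<in>UNIV. qg x a y * lift G t y) \<le> lift G t x"
    by simp
qed

lemma coarse_H_le_solution:
  assumes t: "t \<in> Cb"
    and nonneg: "\<And>y. y \<in> Ci' t \<Longrightarrow> 0 \<le> G y t"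
    and sol: "\<And>y. y \<in> Ci' t \<Longrightarrow> G y t = interior_rhs G y t"
    and s: "s \<in> Ci' t \<or> (s \<in> Cb \<and> 0 < Pcoarse s t \<and> G s t = boundary_rhs G s t)"
  shows "Gcoarse s t \<le> G s t"
proof -
  have le: "dhit t y \<le> lift G t y" for y
    by (rule discounted_hit_sum_le_lift[OF t nonneg sol])
  from s consider "s \<in> Ci' t" | "s \<in> Cb" "0 < Pcoarse s t" "G s t = boundary_rhs G s t"
    by blast
  then show ?thesis
  proof cases
    case 1
    then have "Gcoarse s t = dhit t s / hit t s"
      using cluster_disj by (auto simp: coarse_H_eq)
    also have "\<dots> \<le> lift G t s / hit t s"
      using le 1 by (simp add: divide_right_mono)
    also have "\<dots> = G s t"
      using 1 by (simp add: lift_def)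
    finally show ?thesis .
  next
    case 2
    have "(\<Sum>a\<in>UNIV. \<Sum>y\<in>UNIV. qg s a y * dhit t y) \<le> (\<Sum>a\<in>UNIV. \<Sum>y\<in>UNIV. qg s a y * lift G t y)"
      by (intro sum_mono mult_left_mono le discounted_nonneg)
    then show ?thesis
      using 2 by (simp add: coarse_H_eq rhs_eq_lift(2)[OF t] divide_right_mono)
  qed
qed

end

theorem proposition3:
  fixes P Gam :: "'s::finite \<Rightarrow> 'a::finite \<Rightarrow> 's \<Rightarrow> real"
    and pol :: "'s \<Rightarrow> 'a \<Rightarrow> real"
    and B Ci Cb :: "'s set"
  assumes P_nonneg: "\<forall>s a s'. 0 \<le> P s a s'"
    and P_stoch: "\<forall>s a. (\<Sum>s'\<in>UNIV. P s a s') = 1"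
    and Gam_range: "\<forall>s a s'. 0 < Gam s a s' \<and> Gam s a s' < 1"
    and cluster_disj: "Ci \<inter> Cb = {}"
    and interior: "Ci \<subseteq> - B"
    and boundary: "Cb \<subseteq> B"
    and policy: "\<forall>s\<in>Ci \<union> Cb. (\<forall>a. 0 \<le> pol s a) \<and> (\<Sum>a\<in>UNIV. pol s a) = 1"
    and reach: "boundary_reachable (Ci \<union> Cb) Cb P pol"
  defines "H \<equiv> coarse_H Ci Cb P Gam pol"
    and "h \<equiv> hfun Ci Cb P pol"
    and "Pt \<equiv> Ptilde Ci Cb P pol"
    and "Ph \<equiv> P_h Ci Cb P pol"
    and "Pth \<equiv> P_th Ci Cb P pol"
  defines "Idx \<equiv> (\<lambda>s s'. s' \<in> Cb \<and> ((s \<in> Ci \<and> h s' s > 0) \<or> (s \<in> Cb \<and> Pt s s' > 0)))"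
    and "Sys \<equiv> (\<lambda>G s s'.
           (s \<in> Ci \<and> h s' s > 0 \<longrightarrow>
              G s s' = (\<Sum>s''\<in>{x \<in> Ci. h s' x > 0}. \<Sum>a'\<in>UNIV. Ph s' s a' s'' * Gam s a' s'' * G s'' s')
                       + (\<Sum>a'\<in>UNIV. Ph s' s a' s' * Gam s a' s'))
         \<and> (s \<in> Cb \<and> Pt s s' > 0 \<longrightarrow>
              G s s' = (\<Sum>s''\<in>{x \<in> Ci. h s' x > 0}. \<Sum>a'\<in>UNIV. Pth s' s a' s'' * Gam s a' s'' * G s'' s')
                       + (\<Sum>a'\<in>UNIV. Pth s' s a' s' * Gam s a' s')))"
  shows "(\<forall>s s'. Idx s s' \<longrightarrow> 0 \<le> H s s' \<and> Sys H s s')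
       \<and> (\<forall>G. (\<forall>s s'. Idx s s' \<longrightarrow> 0 \<le> G s s' \<and> Sys G s s')
              \<longrightarrow> (\<forall>s s'. Idx s s' \<longrightarrow> H s s' \<le> G s s'))"
proof -
  interpret cluster_policy P Gam pol Ci Cb
    using P_nonneg P_stoch Gam_range cluster_disj policy by unfold_locales (auto simp: less_imp_le)
  have Sys_iff: "Sys G s t \<longleftrightarrow> (s \<in> Ci \<and> 0 < h t s \<longrightarrow> G s t = interior_rhs G s t)
                               \<and> (s \<in> Cb \<and> 0 < Pt s t \<longrightarrow> G s t = boundary_rhs G s t)" for G s t
    by (simp add: Sys_def interior_rhs_def boundary_rhs_def h_def Ph_def Pth_def Pt_def)
  have "0 \<le> H s t \<and> Sys H s t" if "Idx s t" for s t
    using that coarse_H_nonneg coarse_H_solves by (auto simp: Sys_iff Idx_def H_def)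
  moreover have "H s t \<le> G s t"
    if sol: "\<forall>s s'. Idx s s' \<longrightarrow> 0 \<le> G s s' \<and> Sys G s s'" and "Idx s t" for G s t
  proof -
    have t: "t \<in> Cb"
      using \<open>Idx s t\<close> by (simp add: Idx_def)
    have interior_sol: "0 \<le> G y t \<and> Sys G y t" if "y \<in> Ci' t" for y
      using sol that t by (simp add: Idx_def h_def)
    show ?thesis
      unfolding H_def
    proof (rule coarse_H_le_solution[OF t])
      show "0 \<le> G y t" "G y t = interior_rhs G y t" if "y \<in> Ci' t" for y
        using interior_sol[OF that] that unfolding Sys_iff h_def by blast+
      show "s \<in> Ci' t \<or> s \<in> Cb \<and> 0 < Pcoarse s t \<and> G s t = boundary_rhs G s t"
        using sol \<open>Idx s t\<close> by (auto simp: Idx_def Sys_iff h_def Pt_def)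
    qed
  qed
  ultimately show ?thesis
    by blast
qed

end
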